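(* Let $\mathcal V\subset\mathbb Q$ satisfy Hypothesis (H) and let $\mathcal R\subset\mathbb Q$ satisfy property $\star_{\mathcal V}$. Set $\Gamma=\mathcal V\setminus\mathcal R$ and $\Lambda=\psi(\Gamma)$. Then for every $g\in\mathscr H_{|\Lambda}$ there exists $f\in\mathscr H_{|\Gamma}$ such that $L(f)=g$.
   Context: Let $\mathbf K$ be a field and $\ell\geq 2$ an integer. Let $\mathscr H$ be the field of Hahn series $f=\sum_{\gamma\in\mathbb Q}f_\gamma z^\gamma$ with coefficients in $\mathbf K$ and well-ordered support $\operatorname{supp} f=\{\gamma: f_\gamma\neq 0\}$; for $Q\subset\mathbb Q$, $\mathscr H_{|Q}=\{f\in\mathscr H:\operatorname{supp} f\subset Q\}$. Let $\phi_\ell$ be the automorphism $f(z)\mapsto f(z^\ell)$. Let $L=a_n\phi_\ell^n+\dots+a_0$ with $n\geq1$, $a_i\in\mathbf K[z]$, $a_0a_n\neq0$, acting by $L(f)=\sum_i a_i f(z^{\ell^i})$. Let $\mathcal P(L)=\{(\ell^i,j): 0\le i\le n,\ j\in\operatorname{supp} a_i\}$. The Newton polygon of $L$ is the convex hull of $\{(\ell^i,j): 0\le i\le n,\ j\geq\operatorname{val} a_i\}\subset\mathbb R^2$; the slopes of its non-vertical edges form $\mathcal S(L)$. Define $\Psi(v)=\{v\ell^i+j:(\ell^i,j)\in\mathcal P(L)\}$, $\psi(v)=\min\Psi(v)$, $\pi(q)=\max\{(q-j)/\ell^i:(\ell^i,j)\in\mathcal P(L)\}$; images of sets are taken elementwise.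 Hypothesis (H) on $\mathcal V\subset\mathbb Q$: (1) every $f\in\mathscr H$ with $L(f)=0$ satisfies $\operatorname{supp} f\subset\mathcal V$; (2) $\mathcal V$ is well-ordered; (3) $-\mathcal S(L)\subset\mathcal V$; (4) $\bigcup_{v\in\mathcal V}\pi(\Psi(v))=\mathcal V$. A set $\mathcal R\subset\mathbb Q$ satisfies $\star_{\mathcal V}$ if (a) $-\mathcal S(L)\subset\mathcal R\subset\mathcal V$ and (b) $\bigcup_{v\in\mathcal V\setminus\mathcal R}\pi(\Psi(v))=\mathcal V\setminus\mathcal R$. *)

theory Defs
  imports "HOL-Analysis.Analysis" "HOL-Computational_Algebra.Polynomial"
begin

text \<open>Hahn series over Q with coefficients in a field: coefficient functions
  rat => 'k whose support is well-ordered.\<close>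

definition supp :: "(rat \<Rightarrow> 'k::zero) \<Rightarrow> rat set" where
  "supp f = {\<gamma>. f \<gamma> \<noteq> 0}"

definition well_ordered_set :: "rat set \<Rightarrow> bool" where
  "well_ordered_set Q \<longleftrightarrow> (\<forall>S. S \<subseteq> Q \<and> S \<noteq> {} \<longrightarrow> (\<exists>m\<in>S. \<forall>x\<in>S. m \<le> x))"

definition hahn :: "(rat \<Rightarrow> 'k::zero) \<Rightarrow> bool" where
  "hahn f \<longleftrightarrow> well_ordered_set (supp f)"

definition psupp :: "'k::zero poly \<Rightarrow> nat set" where
  "psupp p = {j. coeff p j \<noteq> 0}"

definition pval :: "'k::zero poly \<Rightarrow> nat" where
  "pval p = (LEAST j. coeff p j \<noteq> 0)"

text \<open>The Mahler operator L = sum_{i=0}^n a_i phi_l^i acting on a Hahn series: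
  the coefficient of z^q in a_i(z) f(z^(l^i)) is
  sum_j coeff a_i j * f_{(q-j)/l^i}.\<close>
definition Lop :: "nat \<Rightarrow> nat \<Rightarrow> (nat \<Rightarrow> 'k::field poly) \<Rightarrow> (rat \<Rightarrow> 'k) \<Rightarrow> (rat \<Rightarrow> 'k)" where
  "Lop l n a f = (\<lambda>q. \<Sum>i\<le>n. \<Sum>j\<le>degree (a i).
       coeff (a i) j * f ((q - of_nat j) / of_nat (l ^ i)))"

definition PL :: "nat \<Rightarrow> nat \<Rightarrow> (nat \<Rightarrow> 'k::zero poly) \<Rightarrow> (nat \<times> nat) set" where
  "PL l n a = {(l ^ i, j) | i j. i \<le> n \<and> j \<in> psupp (a i)}"

definition Psi :: "nat \<Rightarrow> nat \<Rightarrow> (nat \<Rightarrow> 'k::zero poly) \<Rightarrow> rat \<Rightarrow> rat set" where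
  "Psi l n a v = {v * of_nat p + of_nat j | p j. (p, j) \<in> PL l n a}"

definition psi :: "nat \<Rightarrow> nat \<Rightarrow> (nat \<Rightarrow> 'k::zero poly) \<Rightarrow> rat \<Rightarrow> rat" where
  "psi l n a v = Min (Psi l n a v)"

definition piL :: "nat \<Rightarrow> nat \<Rightarrow> (nat \<Rightarrow> 'k::zero poly) \<Rightarrow> rat \<Rightarrow> rat" where
  "piL l n a q = Max {(q - of_nat j) / of_nat p | p j. (p, j) \<in> PL l n a}"

definition newton_polygon :: "nat \<Rightarrow> nat \<Rightarrow> (nat \<Rightarrow> 'k::zero poly) \<Rightarrow> (real \<times> real) set" where
  "newton_polygon l n a = convex hull
     {(real (l ^ i), y) | i y. i \<le> n \<and> a i \<noteq> 0 \<and> y \<ge> real (pval (a i))}"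

definition slopes :: "nat \<Rightarrow> nat \<Rightarrow> (nat \<Rightarrow> 'k::zero poly) \<Rightarrow> real set" where
  "slopes l n a = {(snd y - snd x) / (fst y - fst x) | e x y.
      e face_of newton_polygon l n a \<and> aff_dim e = 1 \<and>
      x \<in> e \<and> y \<in> e \<and> fst x \<noteq> fst y}"

definition neg_slopes_in :: "nat \<Rightarrow> nat \<Rightarrow> (nat \<Rightarrow> 'k::zero poly) \<Rightarrow> rat set \<Rightarrow> bool" where
  "neg_slopes_in l n a X \<longleftrightarrow> (\<forall>s \<in> slopes l n a. - s \<in> of_rat ` X)"

definition hypH :: "nat \<Rightarrow> nat \<Rightarrow> (nat \<Rightarrow> 'k::field poly) \<Rightarrow> rat set \<Rightarrow> bool" where
  "hypH l n a V \<longleftrightarrow>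
     (\<forall>f. hahn f \<and> Lop l n a f = (\<lambda>_. 0) \<longrightarrow> supp f \<subseteq> V) \<and>
     well_ordered_set V \<and>
     neg_slopes_in l n a V \<and>
     (\<Union>v\<in>V. piL l n a ` Psi l n a v) = V"

definition star_prop :: "nat \<Rightarrow> nat \<Rightarrow> (nat \<Rightarrow> 'k::field poly) \<Rightarrow> rat set \<Rightarrow> rat set \<Rightarrow> bool" where
  "star_prop l n a V R \<longleftrightarrow>
     neg_slopes_in l n a R \<and> R \<subseteq> V \<and>
     (\<Union>v\<in>V - R. piL l n a ` Psi l n a v) = V - R"

end

theory Submission imports Defs begin

text \<open>
  Write \<open>\<Gamma> = V - R\<close>. For \<open>v \<in> \<Gamma>\<close> the coefficient of \<open>z\<^bsup>\<psi>(v)\<^esup>\<close> in \<open>L(f)\<close> is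
  \<open>c(v) f\<^sub>v\<close> plus a combination of coefficients \<open>f\<^sub>u\<close> with \<open>u < v\<close>: a contribution of \<open>f\<^sub>u\<close>
  with \<open>u > v\<close> would put \<open>\<psi>(v)\<close> in \<open>\<Psi>(u)\<close>, so \<open>\<psi>(u) \<le> \<psi>(v)\<close>, against the strict
  monotonicity of \<open>\<psi>\<close>. The leading coefficient \<open>c(v)\<close> is nonzero, because a minimum of \<open>\<Psi>(v)\<close>
  attained at two points of \<open>P(L)\<close> makes \<open>-v\<close> a slope of the Newton polygon, whereas
  \<open>-S(L) \<subseteq> R\<close>. As \<open>\<Gamma>\<close> is well-ordered, this triangular system is solved by well-founded
  recursion. All other coefficients of \<open>L(f)\<close> vanish: a contribution to \<open>z\<^sup>q\<close> from \<open>u \<in> \<Gamma>\<close>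
  means \<open>q \<in> \<Psi>(u)\<close>, hence \<open>\<pi>(q) \<in> \<Gamma>\<close> by the closure condition of \<open>star_prop\<close>, and
  \<open>q = \<psi>(\<pi>(q))\<close>.
\<close>

lemma well_ordered_set_subset:
  "well_ordered_set V \<Longrightarrow> G \<subseteq> V \<Longrightarrow> well_ordered_set G"
  unfolding well_ordered_set_def by blast

lemma hahn_if_supp_well_ordered:
  "well_ordered_set G \<Longrightarrow> supp f \<subseteq> G \<Longrightarrow> hahn f"
  unfolding hahn_def by (rule well_ordered_set_subset)

lemma wf_less_on_well_ordered_set:
  assumes "well_ordered_set G"
  shows "wf {(u, v). u \<in> G \<and> u < v}"
proof (rule wfI_min)
  fix x :: rat and Q assume "x \<in> Q"
  show "\<exists>z\<in>Q. \<forall>y. (y, z) \<in> {(u, v). u \<in> G \<and> u < v} \<longrightarrow> y \<notin> Q"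
  proof (cases "Q \<inter> G = {}")
    case True
    with \<open>x \<in> Q\<close> show ?thesis by blast
  next
    case False
    then obtain m where m: "m \<in> Q \<inter> G" and min: "\<And>y. y \<in> Q \<inter> G \<Longrightarrow> m \<le> y"
      using assms[unfolded well_ordered_set_def, rule_format, of "Q \<inter> G"] by blast
    have "y \<notin> Q" if "(y, m) \<in> {(u, v). u \<in> G \<and> u < v}" for y
      using that min[of y] by auto
    with m show ?thesis by blast
  qed
qed

lemma pval_in_psupp:
  assumes "p \<noteq> 0"
  shows "pval p \<in> psupp p"
proof -
  from assms have "\<exists>j. coeff p j \<noteq> 0"
    using leading_coeff_neq_0 by blast
  from LeastI_ex[OF this] show ?thesis
    unfolding psupp_def pval_def by simp
qed

lemma pval_le: "j \<in> psupp p \<Longrightarrow> pval p \<le> j"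
  unfolding psupp_def pval_def by (auto intro: Least_le)

locale mahler_operator =
  fixes l n :: nat and a :: "nat \<Rightarrow> 'k::field poly"
  assumes two_le_l: "2 \<le> l" and a0_nonzero: "a 0 \<noteq> 0"
begin

lemma l_power_pos: "0 < l ^ i"
  using two_le_l by simp

lemma PL_iff: "(p, j) \<in> PL l n a \<longleftrightarrow> (\<exists>i\<le>n. p = l ^ i \<and> coeff (a i) j \<noteq> 0)"
  unfolding PL_def psupp_def by auto

lemma PL_finite: "finite (PL l n a)"
proof -
  have "PL l n a \<subseteq> (\<lambda>(i, j). (l ^ i, j)) ` (SIGMA i:{..n}. {..degree (a i)})"
    unfolding PL_def psupp_def by (auto intro: le_degree)
  then show ?thesis
    by (rule finite_subset) auto
qed

lemma PL_nonempty: "PL l n a \<noteq> {}"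
  using pval_in_psupp[OF a0_nonzero] unfolding PL_def by blast

lemma PL_fst_pos: "(p, j) \<in> PL l n a \<Longrightarrow> 0 < p"
  unfolding PL_iff using l_power_pos by blast

lemma PsiI: "(p, j) \<in> PL l n a \<Longrightarrow> v * of_nat p + of_nat j \<in> Psi l n a v"
  unfolding Psi_def by blast

lemma Psi_eq_image: "Psi l n a v = (\<lambda>(p, j). v * of_nat p + of_nat j) ` PL l n a"
  unfolding Psi_def by auto

lemma psi_in_Psi: "psi l n a v \<in> Psi l n a v"
  unfolding psi_def Psi_eq_image using PL_finite PL_nonempty by (intro Min_in) auto

lemma psi_le: "x \<in> Psi l n a v \<Longrightarrow> psi l n a v \<le> x"
  unfolding psi_def Psi_eq_image using PL_finite by (intro Min_le) auto

lemma psi_strict_mono: "v < w \<Longrightarrow> psi l n a v < psi l n a w"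
proof -
  assume "v < w"
  obtain p j where pj: "(p, j) \<in> PL l n a" "psi l n a w = w * of_nat p + of_nat j"
    using psi_in_Psi[of w] unfolding Psi_def by blast
  with \<open>v < w\<close> have "v * of_nat p + of_nat j < psi l n a w"
    using PL_fst_pos by simp
  with psi_le[OF PsiI[OF pj(1), of v]] show ?thesis by linarith
qed

lemma piL_eq_Max: "piL l n a q = Max ((\<lambda>(p, j). (q - of_nat j) / of_nat p) ` PL l n a)"
  unfolding piL_def by (rule arg_cong[where f = Max]) auto

lemma psi_piL: "psi l n a (piL l n a q) = q"
proof -
  let ?S = "(\<lambda>(p, j). (q - of_nat j) / of_nat p) ` PL l n a"
  have fin: "finite ?S" and ne: "?S \<noteq> {}"
    using PL_finite PL_nonempty by simp_all
  obtain p0 j0 where pj0: "(p0, j0) \<in> PL l n a" "piL l n a q = (q - of_nat j0) / of_nat p0"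
    using Max_in[OF fin ne] unfolding piL_eq_Max by auto
  then have "piL l n a q * of_nat p0 + of_nat j0 = q"
    using PL_fst_pos by simp
  with psi_le[OF PsiI[OF pj0(1), of "piL l n a q"]] have le: "psi l n a (piL l n a q) \<le> q"
    by simp
  obtain p j where pj: "(p, j) \<in> PL l n a"
      "psi l n a (piL l n a q) = piL l n a q * of_nat p + of_nat j"
    using psi_in_Psi[of "piL l n a q"] unfolding Psi_def by blast
  have "(q - of_nat j) / of_nat p \<le> piL l n a q"
    unfolding piL_eq_Max using fin pj(1) by (intro Max_ge) auto
  then have "q \<le> piL l n a q * of_nat p + of_nat j"
    using PL_fst_pos[OF pj(1)] by (simp add: divide_le_eq)
  with le pj(2) show ?thesis by linarith
qed

lemma newton_polygon_above_psi:
  assumes "x \<in> newton_polygon l n a"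
  shows "of_rat (psi l n a v) \<le> inner (of_rat v, 1) x"
proof -
  let ?H = "{x. of_rat (psi l n a v) \<le> inner (of_rat v :: real, 1 :: real) x}"
  have "(real (l ^ i), y) \<in> ?H" if "i \<le> n" "a i \<noteq> 0" "real (pval (a i)) \<le> y" for i y
  proof -
    from that have "(l ^ i, pval (a i)) \<in> PL l n a"
      unfolding PL_def using pval_in_psupp by blast
    then have "psi l n a v \<le> v * of_nat (l ^ i) + of_nat (pval (a i))"
      by (rule psi_le[OF PsiI])
    then have "(of_rat (psi l n a v) :: real) \<le> of_rat (v * of_nat (l ^ i) + of_nat (pval (a i)))"
      by (simp only: of_rat_less_eq)
    with \<open>real (pval (a i)) \<le> y\<close> show ?thesis
      by (simp add: inner_Pair of_rat_add of_rat_mult of_rat_power)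
  qed
  then have "{(real (l ^ i), y) | i y. i \<le> n \<and> a i \<noteq> 0 \<and> y \<ge> real (pval (a i))} \<subseteq> ?H"
    by blast
  then have "newton_polygon l n a \<subseteq> ?H"
    unfolding newton_polygon_def by (rule hull_minimal) (rule convex_halfspace_ge)
  with assms show ?thesis by blast
qed

lemma coeff_point_in_newton_polygon:
  assumes "i \<le> n" "coeff (a i) j \<noteq> 0"
  shows "(real (l ^ i), real j) \<in> newton_polygon l n a"
proof -
  have "pval (a i) \<le> j"
    using assms by (intro pval_le) (simp add: psupp_def)
  with assms show ?thesis
    unfolding newton_polygon_def by (intro hull_inc) auto
qed

text \<open>Two minimisers of \<open>\<Psi>(v)\<close> span an edge of the Newton polygon, cut out by the supporting line
  of direction \<open>(1, -v)\<close>.\<close>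

lemma neg_in_slopes_if_psi_attained_twice:
  assumes "i \<le> n" "i' \<le> n" "i \<noteq> i'"
    and "coeff (a i) j \<noteq> 0" "coeff (a i') j' \<noteq> 0"
    and e1: "v * of_nat (l ^ i) + of_nat j = psi l n a v"
    and e2: "v * of_nat (l ^ i') + of_nat j' = psi l n a v"
  shows "- of_rat v \<in> slopes l n a"
proof -
  define c where "c = (of_rat v :: real, 1 :: real)"
  define m where "m = (of_rat (psi l n a v) :: real)"
  define e where "e = newton_polygon l n a \<inter> {x. inner c x = m}"
  define P1 where "P1 = (real (l ^ i), real j)"
  define P2 where "P2 = (real (l ^ i'), real j')"
  have on_line: "inner c (real (l ^ i), real j) = m"
    if "v * of_nat (l ^ i) + of_nat j = psi l n a v" for i j
    using arg_cong[OF that, of of_rat] unfolding c_def m_def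
    by (simp add: inner_Pair of_rat_add of_rat_mult of_rat_power)
  have "convex (newton_polygon l n a)"
    unfolding newton_polygon_def by (rule convex_convex_hull)
  then have face: "e face_of newton_polygon l n a"
    unfolding e_def c_def m_def by (rule face_of_Int_supporting_hyperplane_ge[OF _ newton_polygon_above_psi])
  have P12: "P1 \<in> e" "P2 \<in> e"
    unfolding e_def P1_def P2_def
    using assms coeff_point_in_newton_polygon on_line[OF e1] on_line[OF e2] by auto
  have fst_ne: "fst P1 \<noteq> fst P2"
    using \<open>i \<noteq> i'\<close> two_le_l unfolding P1_def P2_def by (simp add: power_inject_exp)
  have "aff_dim e \<le> aff_dim {x. inner c x = m}"
    unfolding e_def by (rule aff_dim_subset) blast
  also have "\<dots> = 1"
    using aff_dim_hyperplane[of c m] unfolding c_def by (simp add: zero_prod_def)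
  finally have "aff_dim e \<le> 1" .
  moreover have "aff_dim {P1, P2} \<le> aff_dim e"
    using P12 by (intro aff_dim_subset) auto
  moreover have "P1 \<noteq> P2"
    using fst_ne by blast
  ultimately have "aff_dim e = 1"
    by simp
  then have slope: "(snd P2 - snd P1) / (fst P2 - fst P1) \<in> slopes l n a"
    unfolding slopes_def using face P12 fst_ne
    by (intro CollectI exI[of _ e] exI[of _ P1] exI[of _ P2]) simp
  have slope_eq: "(snd P2 - snd P1) / (fst P2 - fst P1) = - of_rat v"
  proof -
    have "real j' - real j = - of_rat v * (real (l ^ i') - real (l ^ i))"
      using on_line[OF e1] on_line[OF e2] unfolding c_def by (simp add: inner_Pair algebra_simps)
    with fst_ne show ?thesis
      unfolding P1_def P2_def by simp
  qed
  from slope show ?thesis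
    unfolding slope_eq .
qed

lemma psi_minimiser_unique:
  assumes "neg_slopes_in l n a R" "v \<notin> R"
    and "i \<le> n" "i' \<le> n" "coeff (a i) j \<noteq> 0" "coeff (a i') j' \<noteq> 0"
    and e1: "v * of_nat (l ^ i) + of_nat j = psi l n a v"
    and e2: "v * of_nat (l ^ i') + of_nat j' = psi l n a v"
  shows "i = i' \<and> j = j'"
proof (cases "i = i'")
  case True
  from e1 e2 have "(of_nat j :: rat) = of_nat j'"
    unfolding True by linarith
  with True show ?thesis by simp
next
  case False
  have "- of_rat v \<in> slopes l n a"
    using assms(3,4) False assms(5,6) e1 e2 by (rule neg_in_slopes_if_psi_attained_twice)
  with assms(1) have "of_rat v \<in> (of_rat ` R :: real set)"
    unfolding neg_slopes_in_def by force
  then have "v \<in> R"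
    by (auto simp: of_rat_eq_iff)
  with \<open>v \<notin> R\<close> show ?thesis by simp
qed

text \<open>The monomial \<open>z\<^sup>j\<close> of \<open>a\<^sub>i\<close> moves \<open>z\<^bsup>origin i j q\<^esup>\<close> (after \<open>\<phi>\<^sub>\<ell>\<^sup>i\<close>) to \<open>z\<^sup>q\<close>.\<close>

definition origin :: "nat \<Rightarrow> nat \<Rightarrow> rat \<Rightarrow> rat" where
  "origin i j q = (q - of_nat j) / of_nat (l ^ i)"

lemma origin_eq_iff: "origin i j q = u \<longleftrightarrow> u * of_nat (l ^ i) + of_nat j = q"
  using l_power_pos[of i] unfolding origin_def by (auto simp: field_simps)

lemma Lop_eq_sum_origin:
  "Lop l n a f q = (\<Sum>i\<le>n. \<Sum>j\<le>degree (a i). coeff (a i) j * f (origin i j q))"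
  unfolding Lop_def origin_def by simp

definition diag_coeff :: "rat \<Rightarrow> 'k" where
  "diag_coeff v = (\<Sum>i\<le>n. \<Sum>j\<le>degree (a i).
     if origin i j (psi l n a v) = v then coeff (a i) j else 0)"

definition lower_part :: "rat set \<Rightarrow> (rat \<Rightarrow> 'k) \<Rightarrow> rat \<Rightarrow> 'k" where
  "lower_part G f v = (\<Sum>i\<le>n. \<Sum>j\<le>degree (a i).
     if origin i j (psi l n a v) \<in> G \<and> origin i j (psi l n a v) < v
     then coeff (a i) j * f (origin i j (psi l n a v)) else 0)"

lemma lower_part_cong:
  "(\<And>u. u \<in> G \<Longrightarrow> u < v \<Longrightarrow> f u = h u) \<Longrightarrow> lower_part G f v = lower_part G h v"
  unfolding lower_part_def by (intro sum.cong) auto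

lemma Lop_at_psi:
  assumes "supp f \<subseteq> G"
  shows "Lop l n a f (psi l n a v) = diag_coeff v * f v + lower_part G f v"
proof -
  have term_split: "coeff (a i) j * f (origin i j (psi l n a v)) =
      (if origin i j (psi l n a v) = v then coeff (a i) j else 0) * f v +
      (if origin i j (psi l n a v) \<in> G \<and> origin i j (psi l n a v) < v
       then coeff (a i) j * f (origin i j (psi l n a v)) else 0)"
    if "i \<le> n" for i j
  proof -
    let ?u = "origin i j (psi l n a v)"
    have "coeff (a i) j = 0" if "v < ?u"
    proof (rule ccontr)
      assume "coeff (a i) j \<noteq> 0"
      with \<open>i \<le> n\<close> have "(l ^ i, j) \<in> PL l n a"
        unfolding PL_iff by blast
      from PsiI[OF this, of ?u] have "psi l n a v \<in> Psi l n a ?u"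
        unfolding origin_eq_iff[THEN iffD1, OF refl] .
      with psi_strict_mono[OF \<open>v < ?u\<close>] show False
        using psi_le by fastforce
    qed
    moreover have "f ?u = 0" if "?u \<notin> G"
      using that assms unfolding supp_def by blast
    ultimately show ?thesis
      by (cases "?u = v") auto
  qed
  have "Lop l n a f (psi l n a v) = (\<Sum>i\<le>n. \<Sum>j\<le>degree (a i).
      (if origin i j (psi l n a v) = v then coeff (a i) j else 0) * f v +
      (if origin i j (psi l n a v) \<in> G \<and> origin i j (psi l n a v) < v
       then coeff (a i) j * f (origin i j (psi l n a v)) else 0))"
    unfolding Lop_eq_sum_origin
    by (rule sum.cong[OF refl], rule sum.cong[OF refl], rule term_split) simp
  then show ?thesis
    unfolding diag_coeff_def lower_part_def by (simp only: sum.distrib sum_distrib_right)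
qed

lemma diag_coeff_nonzero:
  assumes "neg_slopes_in l n a R" "v \<notin> R"
  shows "diag_coeff v \<noteq> 0"
proof -
  obtain p j0 where "(p, j0) \<in> PL l n a" and psi_eq: "psi l n a v = v * of_nat p + of_nat j0"
    using psi_in_Psi[of v] unfolding Psi_def by blast
  then obtain i0 where i0: "i0 \<le> n" "coeff (a i0) j0 \<noteq> 0" and "p = l ^ i0"
    unfolding PL_iff by blast
  with psi_eq have e0: "v * of_nat (l ^ i0) + of_nat j0 = psi l n a v"
    by simp
  have "diag_coeff v = (\<Sum>i\<le>n. \<Sum>j\<le>degree (a i). if (i, j) = (i0, j0) then coeff (a i0) j0 else 0)"
    unfolding diag_coeff_def
  proof (intro sum.cong refl)
    fix i j assume "i \<in> {..n}"
    then have "i \<le> n" by simp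
    have "origin i j (psi l n a v) = v \<and> coeff (a i) j \<noteq> 0 \<longleftrightarrow> (i, j) = (i0, j0)"
      using psi_minimiser_unique[where j = j, OF assms \<open>i \<le> n\<close> i0(1) _ i0(2) _ e0] e0 i0(2)
      by (auto simp: origin_eq_iff)
    then show "(if origin i j (psi l n a v) = v then coeff (a i) j else 0) =
        (if (i, j) = (i0, j0) then coeff (a i0) j0 else 0)"
      by auto
  qed
  also have "\<dots> = (\<Sum>i\<le>n. if i = i0 then coeff (a i0) j0 else 0)"
  proof (intro sum.cong refl)
    fix i
    show "(\<Sum>j\<le>degree (a i). if (i, j) = (i0, j0) then coeff (a i0) j0 else 0) =
        (if i = i0 then coeff (a i0) j0 else 0)"
      using le_degree[OF i0(2)] by (cases "i = i0") auto
  qed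
  also have "\<dots> = coeff (a i0) j0"
    using i0(1) by simp
  finally show ?thesis
    using i0(2) by simp
qed

lemma Lop_eq_zero_off_psi_image:
  assumes "supp f \<subseteq> G" "(\<Union>v\<in>G. piL l n a ` Psi l n a v) \<subseteq> G" "q \<notin> psi l n a ` G"
  shows "Lop l n a f q = 0"
  unfolding Lop_eq_sum_origin
proof (intro sum.neutral ballI)
  fix i j assume "i \<in> {..n}"
  show "coeff (a i) j * f (origin i j q) = 0"
  proof (rule ccontr)
    assume nz: "coeff (a i) j * f (origin i j q) \<noteq> 0"
    then have "(l ^ i, j) \<in> PL l n a"
      using \<open>i \<in> {..n}\<close> unfolding PL_iff by auto
    from PsiI[OF this, of "origin i j q"] have "q \<in> Psi l n a (origin i j q)"
      unfolding origin_eq_iff[THEN iffD1, OF refl] .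
    moreover have "origin i j q \<in> G"
      using nz assms(1) unfolding supp_def by auto
    ultimately have "piL l n a q \<in> G"
      using assms(2) by blast
    with assms(3) show False
      using psi_piL by (metis image_eqI)
  qed
qed

lemma Lop_solvable:
  assumes "well_ordered_set G"
    and "\<And>v. v \<in> G \<Longrightarrow> diag_coeff v \<noteq> 0"
    and "(\<Union>v\<in>G. piL l n a ` Psi l n a v) \<subseteq> G"
    and "supp g \<subseteq> psi l n a ` G"
  shows "\<exists>f. supp f \<subseteq> G \<and> Lop l n a f = g"
proof -
  define F where "F h v = (if v \<in> G then (g (psi l n a v) - lower_part G h v) / diag_coeff v else 0)"
    for h v
  define R where "R = {(u, v). u \<in> G \<and> u < v}"
  define f where "f = wfrec R F"
  have "adm_wf R F"
    unfolding adm_wf_def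
  proof (intro allI impI)
    fix h h' :: "rat \<Rightarrow> 'k" and v :: rat
    assume agree: "\<forall>u. (u, v) \<in> R \<longrightarrow> h u = h' u"
    have "lower_part G h v = lower_part G h' v"
      by (rule lower_part_cong) (use agree in \<open>simp add: R_def\<close>)
    then show "F h v = F h' v"
      unfolding F_def by simp
  qed
  then have "f = F f"
    unfolding f_def R_def by (rule wfrec_fixpoint[OF wf_less_on_well_ordered_set[OF assms(1)]])
  then have f_eq: "f v = F f v" for v
    by (rule fun_cong)
  have supp_f: "supp f \<subseteq> G"
    unfolding supp_def using f_eq by (auto simp: F_def)
  have "Lop l n a f q = g q" for q
  proof (cases "q \<in> psi l n a ` G")
    case True
    then obtain v where "v \<in> G" and q: "q = psi l n a v" by blast
    then have "diag_coeff v * f v = g q - lower_part G f v"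
      using f_eq[of v] assms(2) by (simp add: F_def)
    then show ?thesis
      unfolding q Lop_at_psi[OF supp_f] by simp
  next
    case False
    with assms(4) have "g q = 0"
      unfolding supp_def by blast
    with Lop_eq_zero_off_psi_image[OF supp_f assms(3) False] show ?thesis by simp
  qed
  with supp_f show ?thesis by blast
qed

end

theorem mainTheorem16:
  fixes l n :: nat and a :: "nat \<Rightarrow> 'k::field poly" and V R :: "rat set"
  assumes "l \<ge> 2" and "n \<ge> 1" and "a 0 \<noteq> 0" and "a n \<noteq> 0"
    and "hypH l n a V" and "star_prop l n a V R"
  shows "\<forall>g. hahn g \<and> supp g \<subseteq> psi l n a ` (V - R) \<longrightarrow>
           (\<exists>f. hahn f \<and> supp f \<subseteq> V - R \<and> Lop l n a f = g)"
proof (intro allI impI)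
  fix g :: "rat \<Rightarrow> 'k"
  assume g: "hahn g \<and> supp g \<subseteq> psi l n a ` (V - R)"
  interpret mahler_operator l n a
    using assms(1,3) by unfold_locales
  have "well_ordered_set V"
    using assms(5) unfolding hypH_def by simp
  then have wo: "well_ordered_set (V - R)"
    by (rule well_ordered_set_subset) blast
  have slopes: "neg_slopes_in l n a R"
    and closed: "(\<Union>v\<in>V - R. piL l n a ` Psi l n a v) \<subseteq> V - R"
    using assms(6) unfolding star_prop_def by simp_all
  have "diag_coeff v \<noteq> 0" if "v \<in> V - R" for v
    using that diag_coeff_nonzero[OF slopes] by blast
  from Lop_solvable[OF wo this closed conjunct2[OF g]]
  obtain f where "supp f \<subseteq> V - R" "Lop l n a f = g"
    by blast
  with hahn_if_supp_well_ordered[OF wo] show "\<exists>f. hahn f \<and> supp f \<subseteq> V - R \<and> Lop l n a f = g"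
    by blast
qed

end
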